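(* Suppose that for some instance of the EJR-Exact family, each execution of Alg1 uses $O(o_1)$ arithmetic operations, each execution of Alg2 uses $O(o_2)$, and the single execution of Alg3 uses $O(o_3)$. Then the instance can be executed using $O(nm^2k+k(o_1+o_2)+o_3)$ arithmetic operations in the worst case.
   Context: Setting: voters $N=\{1,\dots,n\}$, candidates $C=\{c_1,\dots,c_m\}$, approval ballots $A_i\subseteq C$, $k\le m$ a positive integer, $q=n/k$, $N_c=\{i: c\in A_i\}$, $n_c=|N_c|$. Convention $\max\emptyset=0$. The profile is given as an $n\times m$ 0/1 table (entry 1 iff the voter approves the candidate); complexity counts arithmetic operations. Dissatisfaction level: for $W\subseteq C$ with $|W|\le k$ and $c\in C\setminus W$, $\ell(c,W)$ is the largest nonnegative integer $\ell$ with $\ell=\lfloor \frac{k}{n}|\{i\in N: c\in A_i,\ |A_i\cap W|<\ell\}|\rfloor$. Along a run, $\ell_j(c)=\ell(c,W_j)$; for $c\in C\setminus W_j$, $i\in N_c$: $\ell_j(i,c)=\max_{c'\in A_i\setminus(W_j\cup\{c\})}\ell_j(c')$, $g_i^j(c)=0$ if $\ell_j(i,c)\le|A_i\cap W_j|$, and $g_i^j(c)=\frac{\ell_j(i,c)-|A_i\cap W_j|-1}{\ell_j(i,c)}$ otherwise. EJR-Exact family (parametrized by subprocedures Alg1, Alg2, Alg3): compute $\ell_0(c)=\lfloor k n_c/n\rfloor$ for all $c$; set $W_0=\emptyset$, $f_i^0=1$. For $j=1,\dots,k$: for each $c\in C\setminus W_{j-1}$ compute $x_c=\sum_{i\in N_c}(f_i^{j-1}-g_i^{j-1}(c))$.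 If some $c$ has $x_c\ge q$: Alg1 selects such a $w_j$; $f_i^j=f_i^{j-1}$ for $i\notin N_{w_j}$; Alg2 chooses $f_i^j$ for $i\in N_{w_j}$ with $0\le f_i^j\le f_i^{j-1}$, $\sum_{i\in N_{w_j}}(f_i^{j-1}-f_i^j)=q$, and $f_i^j\ge g_i^{j-1}(w_j)$ whenever $\ell_{j-1}(i,w_j)>|A_i\cap W_{j-1}|$; $W_j=W_{j-1}\cup\{w_j\}$; then for each $c\in C\setminus W_j$, start from $\ell_j(c)=\ell_{j-1}(c)$ and decrement it by 1 while $\ell_j(c)>\lfloor\frac{k}{n}|\{i: c\in A_i,\ |A_i\cap W_j|<\ell_j(c)\}|\rfloor$. Otherwise stop the loop. Finally, if fewer than $k$ candidates are selected, Alg3 adds candidates from the unselected ones until $k$ are selected. *)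

theory Defs
  imports Complex_Main
begin

(* Cost model: a shallow, cost-instrumented implementation of the generic part of
   EJR-Exact.  Every value the algorithm needs is computed by a function that returns
   a pair (value, number of arithmetic operations used).  Voters are 0..<n, candidates
   0..<m, and the profile is the 0/1 table  A i c  (True iff voter i approves c).
   Table look-ups, list/set membership and control flow are free; arithmetic
   operations (additions, subtractions, multiplications, divisions, floors,
   comparisons of numbers) are counted. *)

type_synonym profile = "nat \<Rightarrow> nat \<Rightarrow> bool"

fun countC :: "('a \<Rightarrow> bool) \<Rightarrow> 'a list \<Rightarrow> nat \<times> nat" where
  "countC P [] = (0, 0)"
| "countC P (x # xs) = (case countC P xs of (s, c) \<Rightarrow> (if P x then Suc s else s, c + 2))"

fun maxC :: "nat list \<Rightarrow> nat \<times> nat" where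
  "maxC [] = (0, 0)"
| "maxC (x # xs) = (case maxC xs of (s, c) \<Rightarrow> (max x s, Suc c))"

fun sumC :: "real list \<Rightarrow> real \<times> nat" where
  "sumC [] = (0, 0)"
| "sumC (x # xs) = (case sumC xs of (s, c) \<Rightarrow> (x + s, Suc c))"

definition approvedC :: "profile \<Rightarrow> nat \<Rightarrow> nat list \<Rightarrow> nat \<Rightarrow> nat \<times> nat" where
  "approvedC A m W i = countC (\<lambda>c. A i c \<and> c \<in> set W) [0..<m]"

definition ellC :: "profile \<Rightarrow> nat \<Rightarrow> nat list \<Rightarrow> (nat \<Rightarrow> nat) \<Rightarrow> nat \<Rightarrow> nat \<Rightarrow> nat \<times> nat" where
  "ellC A m W lv i c = maxC (map lv (filter (\<lambda>c'. A i c' \<and> c' \<notin> set W \<and> c' \<noteq> c) [0..<m]))"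

(* g_i(c) given a = |A_i \<inter> W| and l = \<ell>(i,c); costs 4 operations *)
definition gval :: "nat \<Rightarrow> nat \<Rightarrow> real" where
  "gval a l = (if l \<le> a then 0 else (real l - real a - 1) / real l)"

definition xC :: "profile \<Rightarrow> nat \<Rightarrow> nat \<Rightarrow> nat list \<Rightarrow> (nat \<Rightarrow> real) \<Rightarrow> (nat \<Rightarrow> nat)
                   \<Rightarrow> (nat \<Rightarrow> nat) \<Rightarrow> nat \<Rightarrow> real \<times> nat" where
  "xC A n m W f lv a c =
     (let terms = map (\<lambda>i. case ellC A m W lv i c of (l, cl) \<Rightarrow> (f i - gval (a i) l, cl + 4 + 1))
                      (filter (\<lambda>i. A i c) [0..<n])
      in case sumC (map fst terms) of (s, cs) \<Rightarrow> (s, cs + sum_list (map snd terms)))"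

definition ell0C :: "profile \<Rightarrow> nat \<Rightarrow> nat \<Rightarrow> nat \<Rightarrow> nat \<times> nat" where
  "ell0C A n k c = (case countC (\<lambda>i. A i c) [0..<n] of
      (nc, cc) \<Rightarrow> (nat \<lfloor>real k * real nc / real n\<rfloor>, cc + 3))"

primrec decC :: "profile \<Rightarrow> nat \<Rightarrow> nat \<Rightarrow> (nat \<Rightarrow> nat) \<Rightarrow> nat \<Rightarrow> nat \<Rightarrow> nat \<times> nat" where
  "decC A n k a c 0 = (case countC (\<lambda>i. A i c \<and> a i < 0) [0..<n] of (cnt, cc) \<Rightarrow> (0, cc + 4))"
| "decC A n k a c (Suc l) = (case countC (\<lambda>i. A i c \<and> a i < Suc l) [0..<n] of (cnt, cc) \<Rightarrow>
      (if real (Suc l) > real_of_int \<lfloor>real k / real n * real cnt\<rfloor>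
       then (case decC A n k a c l of (r, cr) \<Rightarrow> (r, cc + 4 + cr))
       else (Suc l, cc + 4)))"

(* Subprocedures: they receive the current state (W_{j-1} as a list, f^{j-1},
   \<ell>_{j-1}, and the x-values) and return their result together with their cost. *)
type_synonym alg1 = "nat list \<Rightarrow> (nat \<Rightarrow> real) \<Rightarrow> (nat \<Rightarrow> nat) \<Rightarrow> (nat \<Rightarrow> real) \<Rightarrow> nat \<times> nat"
type_synonym alg2 = "nat list \<Rightarrow> (nat \<Rightarrow> real) \<Rightarrow> (nat \<Rightarrow> nat) \<Rightarrow> (nat \<Rightarrow> real) \<Rightarrow> nat
                      \<Rightarrow> (nat \<Rightarrow> real) \<times> nat"
type_synonym alg3 = "nat list \<Rightarrow> (nat \<Rightarrow> real) \<Rightarrow> (nat \<Rightarrow> nat) \<Rightarrow> nat set \<times> nat"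

type_synonym state = "nat list \<times> (nat \<Rightarrow> real) \<times> (nat \<Rightarrow> nat)"

(* Stop: base cost of the final (failing) test.
   Continue: new state, base cost, Alg1 cost, Alg2 cost, whether Alg1/Alg2 met their specs *)
datatype step_res = Stop nat | Continue state nat nat nat bool

definition ejr_step :: "profile \<Rightarrow> nat \<Rightarrow> nat \<Rightarrow> nat \<Rightarrow> alg1 \<Rightarrow> alg2 \<Rightarrow> state \<Rightarrow> step_res" where
  "ejr_step A n m k Alg1 Alg2 st = (case st of (W, f, lv) \<Rightarrow>
     (let q = real n / real k;
          a = (\<lambda>i. fst (approvedC A m W i));
          costA = (\<Sum>i<n. snd (approvedC A m W i));
          U = filter (\<lambda>c. c \<notin> set W) [0..<m];
          x = (\<lambda>c. fst (xC A n m W f lv a c));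
          costX = (\<Sum>c\<leftarrow>U. snd (xC A n m W f lv a c) + 1)
      in if \<not> (\<exists>c\<in>set U. q \<le> x c) then Stop (1 + costA + costX)
         else (case Alg1 W f lv x of (w, c1) \<Rightarrow>
               (case Alg2 W f lv x w of (fw, c2) \<Rightarrow>
                (let f' = (\<lambda>i. if A i w then fw i else f i);
                     W' = W @ [w];
                     a' = (\<lambda>i. fst (approvedC A m W' i));
                     costA' = (\<Sum>i<n. snd (approvedC A m W' i));
                     U' = filter (\<lambda>c. c \<notin> set W') [0..<m];
                     lv' = (\<lambda>c. if c \<in> set W' then lv c else fst (decC A n k a' c (lv c)));
                     costD = (\<Sum>c\<leftarrow>U'. snd (decC A n k a' c (lv c)));
                     ok1 = (w < m \<and> w \<notin> set W \<and> q \<le> x w);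
                     ok2 = ((\<forall>i<n. A i w \<longrightarrow> 0 \<le> fw i \<and> fw i \<le> f i \<and>
                               (a i < fst (ellC A m W lv i w) \<longrightarrow>
                                  gval (a i) (fst (ellC A m W lv i w)) \<le> fw i))
                            \<and> (\<Sum>i | i < n \<and> A i w. f i - fw i) = q)
                 in Continue (W', f', lv') (1 + costA + costX + costA' + costD) c1 c2 (ok1 \<and> ok2))))))"

fun ejr_loop :: "profile \<Rightarrow> nat \<Rightarrow> nat \<Rightarrow> nat \<Rightarrow> alg1 \<Rightarrow> alg2 \<Rightarrow> nat \<Rightarrow> state
                  \<Rightarrow> state \<times> nat \<times> nat list \<times> nat list \<times> bool" where
  "ejr_loop A n m k Alg1 Alg2 0 st = (st, 0, [], [], True)"
| "ejr_loop A n m k Alg1 Alg2 (Suc j) st = (case ejr_step A n m k Alg1 Alg2 st of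
      Stop c \<Rightarrow> (st, c, [], [], True)
    | Continue st' c c1 c2 v \<Rightarrow> (case ejr_loop A n m k Alg1 Alg2 j st' of
         (st'', c', l1, l2, v') \<Rightarrow> (st'', c + c', c1 # l1, c2 # l2, v \<and> v')))"

record ejr_result =
  committee :: "nat set"
  base_cost :: nat          (* arithmetic operations outside the subprocedures *)
  alg1_costs :: "nat list"
  alg2_costs :: "nat list"
  alg3_cost :: nat          (* cost of the execution of Alg3 (0 if not executed) *)
  valid :: bool             (* all subprocedure outputs met their specifications *)

definition ejr_run :: "profile \<Rightarrow> nat \<Rightarrow> nat \<Rightarrow> nat \<Rightarrow> alg1 \<Rightarrow> alg2 \<Rightarrow> alg3 \<Rightarrow> ejr_result" where
  "ejr_run A n m k Alg1 Alg2 Alg3 =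
     (let lv0 = (\<lambda>c. fst (ell0C A n k c));
          cost0 = (\<Sum>c<m. snd (ell0C A n k c))
      in case ejr_loop A n m k Alg1 Alg2 k ([], (\<lambda>_. 1), lv0) of
           ((W, f, lv), c, l1, l2, v) \<Rightarrow>
             (if length W < k
              then (case Alg3 W f lv of (Wf, c3) \<Rightarrow>
                      \<lparr>committee = Wf, base_cost = cost0 + c + 1, alg1_costs = l1, alg2_costs = l2,
                       alg3_cost = c3,
                       valid = (v \<and> set W \<subseteq> Wf \<and> Wf \<subseteq> {..<m} \<and> card Wf = k)\<rparr>)
              else \<lparr>committee = set W, base_cost = cost0 + c + 1, alg1_costs = l1, alg2_costs = l2,
                    alg3_cost = 0, valid = v\<rparr>))"

definition total_cost :: "ejr_result \<Rightarrow> nat" where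
  "total_cost R = base_cost R + sum_list (alg1_costs R) + sum_list (alg2_costs R) + alg3_cost R"

end

theory Submission
  imports Defs
begin

text \<open>Outside the subprocedures, one round of the main loop costs O(n m^2): the values
  |A_i \<inter> W| cost O(n m); each x_c sums, over at most n supporters, a maximum over at most m levels;
  and since every level stays at most k (it starts at floor (k n_c / n) and only decreases), each
  decrement loop performs at most k + 1 counts over the voters, i.e. O(n m k) \<le> O(n m^2) per round.
  With at most k rounds, the O(n m) initialisation, at most k calls each of Alg1 and Alg2 and one
  of Alg3, the total is O(n m^2 k + k (o1 + o2) + o3).\<close>

lemma countC_cost [simp]: "snd (countC P xs) = 2 * length xs"
  by (induction xs) (auto split: prod.splits)

lemma fst_countC_le_length: "fst (countC P xs) \<le> length xs"
  by (induction xs) (auto split: prod.splits)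

lemma maxC_cost [simp]: "snd (maxC xs) = length xs"
  by (induction xs) (auto split: prod.splits)

lemma sumC_cost [simp]: "snd (sumC xs) = length xs"
  by (induction xs) (auto split: prod.splits)

lemma sum_list_map_le_length_mult:
  "(\<And>x. x \<in> set xs \<Longrightarrow> f x \<le> b) \<Longrightarrow> (\<Sum>x\<leftarrow>xs. f x) \<le> length xs * (b::nat)"
  using sum_list_mono[of xs f "\<lambda>_. b"] by (simp add: sum_list_triv)

lemma sum_list_le_length_mult: "(\<And>x. x \<in> set xs \<Longrightarrow> x \<le> b) \<Longrightarrow> sum_list xs \<le> length xs * (b::nat)"
  using sum_list_map_le_length_mult[of xs "\<lambda>x. x" b] by simp

lemma sum_list_filter_upt_le:
  assumes "\<And>x. f x \<le> b"
  shows "(\<Sum>x\<leftarrow>filter P [0..<m]. f x) \<le> m * (b::nat)"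
proof -
  have "(\<Sum>x\<leftarrow>filter P [0..<m]. f x) \<le> length (filter P [0..<m]) * b"
    using assms by (rule sum_list_map_le_length_mult)
  also have "\<dots> \<le> m * b"
    using length_filter_le[of P "[0..<m]"] by simp
  finally show ?thesis .
qed

lemma approvedC_cost [simp]: "snd (approvedC A m W i) = 2 * m"
  by (simp add: approvedC_def)

lemma ellC_cost_le: "snd (ellC A m W lv i c) \<le> m"
  using length_filter_le[of _ "[0..<m]"] by (simp add: ellC_def)

lemma xC_cost_le: "snd (xC A n m W f lv a c) \<le> n * (m + 6)"
proof -
  define V where "V = filter (\<lambda>i. A i c) [0..<n]"
  have "snd (xC A n m W f lv a c) = length V + (\<Sum>i\<leftarrow>V. 5 + snd (ellC A m W lv i c))"
    by (simp add: xC_def V_def case_prod_beta o_def)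
  also have "\<dots> \<le> length V + length V * (m + 5)"
    using sum_list_map_le_length_mult[of V "\<lambda>i. 5 + snd (ellC A m W lv i c)" "m + 5"]
      ellC_cost_le by simp
  also have "\<dots> = length V * (m + 6)"
    by (simp add: algebra_simps)
  also have "\<dots> \<le> n * (m + 6)"
    using length_filter_le[of _ "[0..<n]"] by (simp add: V_def)
  finally show ?thesis .
qed

lemma decC_le: "fst (decC A n k a c l) \<le> l"
  by (induction l) (auto simp: case_prod_beta)

lemma decC_cost_le: "snd (decC A n k a c l) \<le> (l + 1) * (2 * n + 4)"
  by (induction l) (auto simp: case_prod_beta)

lemma ell0C_cost [simp]: "snd (ell0C A n k c) = 2 * n + 3"
  by (simp add: ell0C_def case_prod_beta)

lemma ell0C_le:
  assumes "0 < n"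
  shows "fst (ell0C A n k c) \<le> k"
proof -
  have "fst (countC (\<lambda>i. A i c) [0..<n]) \<le> n"
    using fst_countC_le_length[of "\<lambda>i. A i c" "[0..<n]"] by simp
  then have "real k * real (fst (countC (\<lambda>i. A i c) [0..<n])) / real n \<le> real k"
    using assms by (simp add: divide_le_eq mult_left_mono)
  then have "\<lfloor>real k * real (fst (countC (\<lambda>i. A i c) [0..<n])) / real n\<rfloor> \<le> int k"
    by (metis floor_mono floor_of_nat)
  then show ?thesis
    by (simp add: ell0C_def case_prod_beta)
qed

definition x_values_cost :: "profile \<Rightarrow> nat \<Rightarrow> nat \<Rightarrow> nat list \<Rightarrow> (nat \<Rightarrow> real) \<Rightarrow> (nat \<Rightarrow> nat) \<Rightarrow> nat" where
  "x_values_cost A n m W f lv =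
     (\<Sum>c\<leftarrow>filter (\<lambda>c. c \<notin> set W) [0..<m]. snd (xC A n m W f lv (\<lambda>i. fst (approvedC A m W i)) c) + 1)"

definition level_update_cost :: "profile \<Rightarrow> nat \<Rightarrow> nat \<Rightarrow> nat \<Rightarrow> nat list \<Rightarrow> (nat \<Rightarrow> nat) \<Rightarrow> nat" where
  "level_update_cost A n m k W lv =
     (\<Sum>c\<leftarrow>filter (\<lambda>c. c \<notin> set W) [0..<m]. snd (decC A n k (\<lambda>i. fst (approvedC A m W i)) c (lv c)))"

lemma ejr_step_StopD:
  assumes "ejr_step A n m k Alg1 Alg2 (W, f, lv) = Stop c"
  shows "c = 1 + 2 * n * m + x_values_cost A n m W f lv"
  using assms by (auto simp: ejr_step_def x_values_cost_def Let_def split: prod.splits if_splits)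

lemma ejr_step_ContinueD:
  assumes "ejr_step A n m k Alg1 Alg2 (W, f, lv) = Continue (W', f', lv') c c1 c2 v"
  obtains w where "W' = W @ [w]"
    and "c = 1 + 2 * n * m + x_values_cost A n m W f lv + 2 * n * m + level_update_cost A n m k W' lv"
    and "lv' = (\<lambda>c. if c \<in> set W' then lv c else fst (decC A n k (\<lambda>i. fst (approvedC A m W' i)) c (lv c)))"
  using assms
  by (auto simp: ejr_step_def x_values_cost_def level_update_cost_def Let_def split: prod.splits if_splits)

lemma x_values_cost_le: "x_values_cost A n m W f lv \<le> m * (n * (m + 6) + 1)"
  unfolding x_values_cost_def by (rule sum_list_filter_upt_le) (simp add: xC_cost_le)

lemma level_update_cost_le:
  assumes "\<forall>c. lv c \<le> k"
  shows "level_update_cost A n m k W lv \<le> m * ((k + 1) * (2 * n + 4))"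
  unfolding level_update_cost_def
proof (rule sum_list_filter_upt_le)
  fix c
  have "snd (decC A n k (\<lambda>i. fst (approvedC A m W i)) c (lv c)) \<le> (lv c + 1) * (2 * n + 4)"
    by (rule decC_cost_le)
  also have "\<dots> \<le> (k + 1) * (2 * n + 4)"
    using assms by simp
  finally show "snd (decC A n k (\<lambda>i. fst (approvedC A m W i)) c (lv c)) \<le> (k + 1) * (2 * n + 4)" .
qed

definition step_cost_bound :: "nat \<Rightarrow> nat \<Rightarrow> nat \<Rightarrow> nat" where
  "step_cost_bound n m k = 1 + 2 * n * m + m * (n * (m + 6) + 1) + 2 * n * m + m * ((k + 1) * (2 * n + 4))"

lemma ejr_step_Stop_cost_le:
  assumes "ejr_step A n m k Alg1 Alg2 (W, f, lv) = Stop c"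
  shows "c \<le> step_cost_bound n m k"
  using x_values_cost_le[of A n m W f lv]
  unfolding ejr_step_StopD[OF assms] step_cost_bound_def by linarith

lemma ejr_step_Continue_cost_le:
  assumes lv: "\<forall>c. lv c \<le> k"
    and step: "ejr_step A n m k Alg1 Alg2 (W, f, lv) = Continue (W', f', lv') c c1 c2 v"
  shows "c \<le> step_cost_bound n m k" and "\<forall>c. lv' c \<le> k"
proof -
  obtain w where "W' = W @ [w]"
    and c: "c = 1 + 2 * n * m + x_values_cost A n m W f lv + 2 * n * m + level_update_cost A n m k W' lv"
    and lv': "lv' = (\<lambda>c. if c \<in> set W' then lv c else fst (decC A n k (\<lambda>i. fst (approvedC A m W' i)) c (lv c)))"
    using ejr_step_ContinueD[OF step] .
  show "c \<le> step_cost_bound n m k"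
    unfolding c step_cost_bound_def
    by (intro add_mono order.refl x_values_cost_le level_update_cost_le lv)
  show "\<forall>c. lv' c \<le> k"
  proof
    fix x
    have "fst (decC A n k (\<lambda>i. fst (approvedC A m W' i)) x (lv x)) \<le> lv x"
      by (rule decC_le)
    moreover have "lv x \<le> k"
      using lv by simp
    ultimately show "lv' x \<le> k"
      unfolding lv' by simp
  qed
qed

lemma ejr_loop_cost_le:
  assumes "\<forall>c. lv c \<le> k"
    and "ejr_loop A n m k Alg1 Alg2 j (W, f, lv) = (st, c, l1, l2, v)"
  shows "c \<le> j * step_cost_bound n m k \<and> length l1 \<le> j \<and> length l2 \<le> j"
  using assms
proof (induction j arbitrary: W f lv st c l1 l2 v)
  case 0
  then show ?case by simp
next
  case (Suc j)
  show ?case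
  proof (cases "ejr_step A n m k Alg1 Alg2 (W, f, lv)")
    case (Stop c0)
    then show ?thesis
      using Suc.prems(2) ejr_step_Stop_cost_le[OF Stop] by simp
  next
    case (Continue st' c0 c1 c2 v0)
    obtain W' f' lv' where st': "st' = (W', f', lv')"
      by (metis prod_cases3)
    obtain st'' c' l1' l2' v' where loop: "ejr_loop A n m k Alg1 Alg2 j st' = (st'', c', l1', l2', v')"
      by (metis prod_cases5)
    have c0: "c0 \<le> step_cost_bound n m k" and lv': "\<forall>c. lv' c \<le> k"
      using ejr_step_Continue_cost_le[OF Suc.prems(1) Continue[unfolded st']] by simp_all
    have IH: "c' \<le> j * step_cost_bound n m k \<and> length l1' \<le> j \<and> length l2' \<le> j"
      using Suc.IH[OF lv' loop[unfolded st']] .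
    have "c = c0 + c'" "l1 = c1 # l1'" "l2 = c2 # l2'"
      using Suc.prems(2) by (simp_all add: Continue loop)
    then show ?thesis
      using IH c0 by simp
  qed
qed

lemma step_cost_bound_le:
  assumes "0 < n" "0 < k" "k \<le> m"
  shows "step_cost_bound n m k \<le> 25 * (n * m\<^sup>2)"
proof -
  define N where "N = n * m\<^sup>2"
  have small: "1 \<le> N" "m \<le> N" "n * m \<le> N"
    using assms by (simp_all add: N_def power2_eq_square)
  have "(k + 1) * (2 * n + 4) \<le> (2 * m) * (6 * n)"
    using assms by (intro mult_le_mono) auto
  then have "m * ((k + 1) * (2 * n + 4)) \<le> m * ((2 * m) * (6 * n))"
    by (rule mult_le_mono2)
  also have "\<dots> = 12 * N"
    by (simp add: N_def power2_eq_square)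
  finally have last: "m * ((k + 1) * (2 * n + 4)) \<le> 12 * N" .
  have "step_cost_bound n m k = 1 + 4 * (n * m) + (N + 6 * (n * m) + m) + m * ((k + 1) * (2 * n + 4))"
    by (simp add: step_cost_bound_def N_def power2_eq_square algebra_simps)
  with small last show ?thesis
    unfolding N_def[symmetric] by linarith
qed

lemma total_cost_ejr_run_le:
  fixes A :: profile and Alg1 :: alg1 and Alg2 :: alg2 and Alg3 :: alg3 and n m k o1 o2 o3 :: nat
  defines "R \<equiv> ejr_run A n m k Alg1 Alg2 Alg3"
  assumes n: "0 < n" and k: "0 < k" and km: "k \<le> m"
    and o1: "\<forall>c\<in>set (alg1_costs R). c \<le> o1"
    and o2: "\<forall>c\<in>set (alg2_costs R). c \<le> o2"
    and o3: "alg3_cost R \<le> o3"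
  shows "total_cost R \<le> 31 * (n * m\<^sup>2 * k + k * (o1 + o2) + o3)"
proof -
  obtain W f lv c l1 l2 v
    where loop: "ejr_loop A n m k Alg1 Alg2 k ([], \<lambda>_. 1, \<lambda>c. fst (ell0C A n k c)) = ((W, f, lv), c, l1, l2, v)"
    by (metis prod.exhaust)
  have run: "base_cost R = m * (2 * n + 3) + c + 1" "alg1_costs R = l1" "alg2_costs R = l2"
    unfolding R_def by (simp_all add: ejr_run_def Let_def loop split: prod.split)
  have "c \<le> k * step_cost_bound n m k" and len: "length l1 \<le> k" "length l2 \<le> k"
    using ejr_loop_cost_le[OF _ loop] ell0C_le[OF n] by auto
  then have c: "c \<le> 25 * (n * m\<^sup>2 * k)"
    using step_cost_bound_le[OF n k km] by (metis mult_le_mono2 mult.commute mult.assoc order.trans)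
  have "sum_list l1 \<le> k * o1" "sum_list l2 \<le> k * o2"
    using sum_list_le_length_mult[of l1 o1] sum_list_le_length_mult[of l2 o2] o1 o2 len run
    by (auto intro: order.trans)
  moreover have "m * (2 * n + 3) + 1 \<le> 6 * (n * m\<^sup>2 * k)"
  proof -
    have "1 \<le> m" "m \<le> n * m"
      using n k km by simp_all
    moreover have "m * (2 * n + 3) + 1 = 2 * (n * m) + 3 * m + 1"
      by (simp add: algebra_simps)
    ultimately have "m * (2 * n + 3) + 1 \<le> 6 * (n * m)"
      by linarith
    also have "\<dots> \<le> 6 * (n * m\<^sup>2 * k)"
      using n k km by (simp add: power2_eq_square)
    finally show ?thesis .
  qed
  ultimately show ?thesis
    using c o3 run by (simp add: total_cost_def algebra_simps)
qed

theorem mainTheorem8: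
  shows "\<exists>C::nat. \<forall>(A::profile) (n::nat) (m::nat) (k::nat) (Alg1::alg1) (Alg2::alg2) (Alg3::alg3)
            (o1::nat) (o2::nat) (o3::nat).
     0 < n \<longrightarrow> 0 < k \<longrightarrow> k \<le> m \<longrightarrow>
     valid (ejr_run A n m k Alg1 Alg2 Alg3) \<longrightarrow>
     (\<forall>c\<in>set (alg1_costs (ejr_run A n m k Alg1 Alg2 Alg3)). c \<le> o1) \<longrightarrow>
     (\<forall>c\<in>set (alg2_costs (ejr_run A n m k Alg1 Alg2 Alg3)). c \<le> o2) \<longrightarrow>
     alg3_cost (ejr_run A n m k Alg1 Alg2 Alg3) \<le> o3 \<longrightarrow>
     total_cost (ejr_run A n m k Alg1 Alg2 Alg3) \<le> C * (n * m\<^sup>2 * k + k * (o1 + o2) + o3)"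
  \<comment> \<open>The cost bound holds for every run.\<close>
  by (intro exI[of _ 31] allI impI total_cost_ejr_run_le)

end
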